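(* Let $\mathcal{R}=(X,\Phi,\check X,\check\Phi)$ be a semisimple root datum, $\mathcal{T}=(T,\emptyset,\check T,\emptyset)$ a torus, $A$ a finite $\mathbb{Z}$-module, and $h_1:X\to A$, $h_2:T\to A$ surjective homomorphisms with $\Phi\subseteq\ker h_1$. Let $\mathcal{R}'=\mathcal{R}\oplus_{(A,h_1,h_2)}\mathcal{T}=(B,\Phi',\check B,\check\Phi')$ with projections $p_1:B\to X$, $p_2:B\to T$. Then: (a) $\ker(p_1)=\check\Phi'^\perp$, so $p_1$ induces an isomorphism of root data $\mathcal{R}'_{\mathrm{der}}\to\mathcal{R}$; (b) $\ker(p_2)=\Phi'^\top$, so $p_2$ induces an isomorphism of root data $\mathcal{R}'_{\mathrm{rad}}\to\mathcal{T}$; (c) $\ker(h_1\circ p_1)=\ker(h_2\circ p_2)=\Phi'^\top\oplus\check\Phi'^\perp$, so $h_1\circ p_1=h_2\circ p_2$ induces an isomorphism of abelian groups $B/(\Phi'^\top\oplus\check\Phi'^\perp)\to A$.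
   Context: Root data are reduced quadruples $(X,\Phi,\check X,\check\Phi)$ with perfect pairing; a torus is a root datum with no roots; semisimple means $\mathbb{Q}\Phi=\mathbb{Q}\otimes X$. For $S\subseteq X$: $S^\top=\{x\in X: nx\in\mathbb{Z}S$ for some $n>0\}$, $S^\perp=\{y\in\check X:\langle x,y\rangle=0\ \forall x\in S\}$; similarly for subsets of $\check X$. $\mathcal{R}_{\mathrm{rad}}=(X/\Phi^\top,\emptyset,\check\Phi^\perp,\emptyset)$ and $\mathcal{R}_{\mathrm{der}}=(X/\check\Phi^\perp,\Phi,\check\Phi^\top,\check\Phi)$. Induced datum for a submodule $B\supseteq\Phi$: $(B,\Phi,\mathrm{Hom}(B,\mathbb{Z}),\check\iota_B(\check\Phi))$, $\check\iota_B(y)=\langle-,y\rangle|_B$. Central product $\mathcal{R}_1\oplus_{(A,h_1,h_2)}\mathcal{R}_2$ (for surjections $h_i:X_i\to A$ killing roots): the datum induced from the direct sum $\mathcal{R}_1\oplus\mathcal{R}_2$ by $\{(x_1,x_2)\in X_1\oplus X_2:h_1(x_1)=h_2(x_2)\}$. *)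

theory Defs
  imports "HOL-Algebra.Algebra"
begin

text \<open>Z-modules are modelled as commutative groups in the HOL-Algebra sense
(group law written multiplicatively, integer multiples are integer powers).\<close>

record ('a, 'b) root_datum =
  rd_X    :: "'a monoid"
  rd_Phi  :: "'a set"
  rd_Xc   :: "'b monoid"
  rd_Phic :: "'b set"
  rd_pair :: "'a \<Rightarrow> 'b \<Rightarrow> int"

definition homZ :: "('a, 'm) monoid_scheme \<Rightarrow> ('a \<Rightarrow> int) set" where
  "homZ G = {f. f \<in> extensional (carrier G) \<and>
      (\<forall>x\<in>carrier G. \<forall>y\<in>carrier G. f (x \<otimes>\<^bsub>G\<^esub> y) = f x + f y)}"

definition homZ_group :: "('a, 'm) monoid_scheme \<Rightarrow> ('a \<Rightarrow> int) monoid" where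
  "homZ_group G = \<lparr>carrier = homZ G,
      monoid.mult = (\<lambda>f g. restrict (\<lambda>x. f x + g x) (carrier G)),
      monoid.one = restrict (\<lambda>x. 0) (carrier G)\<rparr>"

definition fin_gen :: "('a, 'm) monoid_scheme \<Rightarrow> bool" where
  "fin_gen G \<longleftrightarrow> (\<exists>S. finite S \<and> S \<subseteq> carrier G \<and> generate G S = carrier G)"

definition refl_X :: "('a, 'b) root_datum \<Rightarrow> 'a \<Rightarrow> 'b \<Rightarrow> 'a \<Rightarrow> 'a" where
  "refl_X R a ca x = x \<otimes>\<^bsub>rd_X R\<^esub> (a [^]\<^bsub>rd_X R\<^esub> (- rd_pair R x ca))"

definition refl_Xc :: "('a, 'b) root_datum \<Rightarrow> 'a \<Rightarrow> 'b \<Rightarrow> 'b \<Rightarrow> 'b" where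
  "refl_Xc R a ca y = y \<otimes>\<^bsub>rd_Xc R\<^esub> (ca [^]\<^bsub>rd_Xc R\<^esub> (- rd_pair R a y))"

text \<open>(Reduced) root datum: free f.g. Z-modules X, X^vee in perfect pairing, finite
root set Phi with a bijection to the coroots satisfying the usual axioms.\<close>
definition root_datum :: "('a, 'b) root_datum \<Rightarrow> bool" where
  "root_datum R \<longleftrightarrow>
     comm_group (rd_X R) \<and> comm_group (rd_Xc R) \<and>
     fin_gen (rd_X R) \<and> fin_gen (rd_Xc R) \<and>
     (\<forall>x\<in>carrier (rd_X R). \<forall>x'\<in>carrier (rd_X R). \<forall>y\<in>carrier (rd_Xc R).
         rd_pair R (x \<otimes>\<^bsub>rd_X R\<^esub> x') y = rd_pair R x y + rd_pair R x' y) \<and>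
     (\<forall>x\<in>carrier (rd_X R). \<forall>y\<in>carrier (rd_Xc R). \<forall>y'\<in>carrier (rd_Xc R).
         rd_pair R x (y \<otimes>\<^bsub>rd_Xc R\<^esub> y') = rd_pair R x y + rd_pair R x y') \<and>
     bij_betw (\<lambda>x. restrict (rd_pair R x) (carrier (rd_Xc R))) (carrier (rd_X R)) (homZ (rd_Xc R)) \<and>
     bij_betw (\<lambda>y. restrict (\<lambda>x. rd_pair R x y) (carrier (rd_X R))) (carrier (rd_Xc R)) (homZ (rd_X R)) \<and>
     finite (rd_Phi R) \<and> rd_Phi R \<subseteq> carrier (rd_X R) \<and> rd_Phic R \<subseteq> carrier (rd_Xc R) \<and>
     (\<exists>c. bij_betw c (rd_Phi R) (rd_Phic R) \<and>
        (\<forall>a\<in>rd_Phi R. rd_pair R a (c a) = 2 \<and>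
           refl_X R a (c a) ` rd_Phi R = rd_Phi R \<and>
           refl_Xc R a (c a) ` rd_Phic R = rd_Phic R)) \<and>
     (\<forall>a\<in>rd_Phi R. a \<otimes>\<^bsub>rd_X R\<^esub> a \<notin> rd_Phi R)"

definition rd_torus :: "('a, 'b) root_datum \<Rightarrow> bool" where
  "rd_torus R \<longleftrightarrow> rd_Phi R = {} \<and> rd_Phic R = {}"

definition top_X :: "('a, 'b) root_datum \<Rightarrow> 'a set \<Rightarrow> 'a set" where
  "top_X R S = {x \<in> carrier (rd_X R). \<exists>n::nat. n > 0 \<and> x [^]\<^bsub>rd_X R\<^esub> n \<in> generate (rd_X R) S}"

definition top_Xc :: "('a, 'b) root_datum \<Rightarrow> 'b set \<Rightarrow> 'b set" where
  "top_Xc R S = {y \<in> carrier (rd_Xc R). \<exists>n::nat. n > 0 \<and> y [^]\<^bsub>rd_Xc R\<^esub> n \<in> generate (rd_Xc R) S}"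

definition perp_X :: "('a, 'b) root_datum \<Rightarrow> 'a set \<Rightarrow> 'b set" where
  "perp_X R S = {y \<in> carrier (rd_Xc R). \<forall>x\<in>S. rd_pair R x y = 0}"

definition perp_Xc :: "('a, 'b) root_datum \<Rightarrow> 'b set \<Rightarrow> 'a set" where
  "perp_Xc R S = {x \<in> carrier (rd_X R). \<forall>y\<in>S. rd_pair R x y = 0}"

text \<open>Semisimple: Q Phi = Q \<otimes> X, i.e. every x has a nonzero multiple in Z Phi.\<close>
definition semisimple :: "('a, 'b) root_datum \<Rightarrow> bool" where
  "semisimple R \<longleftrightarrow> top_X R (rd_Phi R) = carrier (rd_X R)"

definition quot_pair :: "('a, 'b) root_datum \<Rightarrow> 'a set \<Rightarrow> 'b \<Rightarrow> int" where
  "quot_pair R C y = rd_pair R (SOME x. x \<in> C) y"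

definition rd_rad :: "('a, 'b) root_datum \<Rightarrow> ('a set, 'b) root_datum" where
  "rd_rad R = \<lparr>rd_X = rd_X R Mod top_X R (rd_Phi R), rd_Phi = {},
      rd_Xc = (rd_Xc R)\<lparr>carrier := perp_X R (rd_Phi R)\<rparr>, rd_Phic = {},
      rd_pair = quot_pair R\<rparr>"

definition rd_der :: "('a, 'b) root_datum \<Rightarrow> ('a set, 'b) root_datum" where
  "rd_der R = \<lparr>rd_X = rd_X R Mod perp_Xc R (rd_Phic R),
      rd_Phi = (\<lambda>a. perp_Xc R (rd_Phic R) #>\<^bsub>rd_X R\<^esub> a) ` rd_Phi R,
      rd_Xc = (rd_Xc R)\<lparr>carrier := top_Xc R (rd_Phic R)\<rparr>, rd_Phic = rd_Phic R,
      rd_pair = quot_pair R\<rparr>"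

definition rd_sum :: "('a, 'b) root_datum \<Rightarrow> ('c, 'd) root_datum \<Rightarrow> ('a \<times> 'c, 'b \<times> 'd) root_datum" where
  "rd_sum R1 R2 = \<lparr>rd_X = rd_X R1 \<times>\<times> rd_X R2,
      rd_Phi = (\<lambda>a. (a, \<one>\<^bsub>rd_X R2\<^esub>)) ` rd_Phi R1 \<union> (\<lambda>a. (\<one>\<^bsub>rd_X R1\<^esub>, a)) ` rd_Phi R2,
      rd_Xc = rd_Xc R1 \<times>\<times> rd_Xc R2,
      rd_Phic = (\<lambda>a. (a, \<one>\<^bsub>rd_Xc R2\<^esub>)) ` rd_Phic R1 \<union> (\<lambda>a. (\<one>\<^bsub>rd_Xc R1\<^esub>, a)) ` rd_Phic R2,
      rd_pair = (\<lambda>(x1, x2) (y1, y2). rd_pair R1 x1 y1 + rd_pair R2 x2 y2)\<rparr>"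

definition rd_induced :: "('a, 'b) root_datum \<Rightarrow> 'a set \<Rightarrow> ('a, 'a \<Rightarrow> int) root_datum" where
  "rd_induced R B = \<lparr>rd_X = (rd_X R)\<lparr>carrier := B\<rparr>, rd_Phi = rd_Phi R,
      rd_Xc = homZ_group ((rd_X R)\<lparr>carrier := B\<rparr>),
      rd_Phic = (\<lambda>y. restrict (\<lambda>x. rd_pair R x y) B) ` rd_Phic R,
      rd_pair = (\<lambda>x f. f x)\<rparr>"

definition central_prod ::
  "('a, 'b) root_datum \<Rightarrow> ('c, 'd) root_datum \<Rightarrow> ('a \<Rightarrow> 'e) \<Rightarrow> ('c \<Rightarrow> 'e)
     \<Rightarrow> ('a \<times> 'c, 'a \<times> 'c \<Rightarrow> int) root_datum" where
  "central_prod R1 R2 h1 h2 =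
     rd_induced (rd_sum R1 R2)
       {(x1, x2). x1 \<in> carrier (rd_X R1) \<and> x2 \<in> carrier (rd_X R2) \<and> h1 x1 = h2 x2}"

definition rd_iso :: "('a, 'b) root_datum \<Rightarrow> ('c, 'd) root_datum \<Rightarrow> ('a \<Rightarrow> 'c) \<Rightarrow> bool" where
  "rd_iso R1 R2 f \<longleftrightarrow> f \<in> iso (rd_X R1) (rd_X R2) \<and> f ` rd_Phi R1 = rd_Phi R2 \<and>
     (\<exists>g. g \<in> iso (rd_Xc R2) (rd_Xc R1) \<and> g ` rd_Phic R2 = rd_Phic R1 \<and>
        (\<forall>x\<in>carrier (rd_X R1). \<forall>y\<in>carrier (rd_Xc R2). rd_pair R1 x (g y) = rd_pair R2 (f x) y))"

definition induced_map :: "('a \<Rightarrow> 'c) \<Rightarrow> 'a set \<Rightarrow> 'c" where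
  "induced_map h C = the_elem (h ` C)"

end

theory Submission
  imports Defs "HOL-Library.Function_Algebras"
begin

text \<open>For a semisimple datum, the reflection-invariant form (y, y') \<mapsto> \<Sum> \<langle>\<alpha>, y\<rangle> \<langle>\<alpha>, y'\<rangle>
  on the cocharacters, the sum running over the roots \<alpha>, is a sum of squares; it shows that a
  character orthogonal to all coroots is trivial and that every cocharacter has a nonzero
  multiple in the coroot lattice. In the central product B = {(x, t). h1 x = h2 t} the roots
  are the (\<alpha>, 1) and the coroots are those of R composed with p1. Hence the annihilator of the
  coroots is the kernel of p1, while the rational closure of the root lattice is the kernel of
  p2, because \<Phi> spans X rationally and the character lattice of T is torsion free. The
  transposes of p1 and p2 identify the cocharacters of R and of T with the cocharacter lattices
  of the two quotients, and (c) follows by writing (x, t) \<in> ker (h1 \<circ> p1) as (x, 1) (1, t).\<close>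

section \<open>Rational linear algebra\<close>

definition scale_fun :: "rat \<Rightarrow> ('i \<Rightarrow> rat) \<Rightarrow> 'i \<Rightarrow> rat" where
  "scale_fun c f = (\<lambda>i. c * f i)"

lemma vector_space_scale_fun: "vector_space (scale_fun :: rat \<Rightarrow> ('i \<Rightarrow> rat) \<Rightarrow> _)"
  by unfold_locales (auto simp: scale_fun_def fun_eq_iff algebra_simps)

lemma vector_space_pair_scale_fun:
  "vector_space_pair (scale_fun :: rat \<Rightarrow> ('i \<Rightarrow> rat) \<Rightarrow> _) ((*) :: rat \<Rightarrow> rat \<Rightarrow> rat)"
proof -
  have "vector_space ((*) :: rat \<Rightarrow> rat \<Rightarrow> rat)"
    by unfold_locales (auto simp: algebra_simps)
  then show ?thesis by (simp add: vector_space_pair_def vector_space_scale_fun)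
qed

lemma sum_fun_apply: "(\<Sum>i\<in>A. f i) x = (\<Sum>i\<in>A. f i x)"
  by (induct A rule: infinite_finite_induct) auto

lemma linear_functional_separating:
  fixes S :: "('i \<Rightarrow> rat) set"
  assumes "d \<notin> module.span scale_fun S"
  shows "\<exists>f. Vector_Spaces.linear scale_fun ((*) :: rat \<Rightarrow> rat \<Rightarrow> rat) f \<and> (\<forall>v\<in>S. f v = 0) \<and> f d = 1"
proof -
  interpret V: vector_space "scale_fun :: rat \<Rightarrow> ('i \<Rightarrow> rat) \<Rightarrow> _" by (rule vector_space_scale_fun)
  interpret P: vector_space_pair "scale_fun :: rat \<Rightarrow> ('i \<Rightarrow> rat) \<Rightarrow> _" "(*) :: rat \<Rightarrow> rat \<Rightarrow> rat"
    by (rule vector_space_pair_scale_fun)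
  obtain B where B: "B \<subseteq> S" "V.independent B" "S \<subseteq> V.span B"
    using V.maximal_independent_subset by blast
  have dB: "d \<notin> V.span B" using assms B(1) V.span_mono by blast
  obtain f where f: "Vector_Spaces.linear scale_fun (*) f"
      "\<forall>x\<in>insert d B. f x = (if x = d then 1 else 0)"
    using P.linear_independent_extend[OF V.independent_insertI[OF dB B(2)], of "\<lambda>x. if x = d then 1 else 0"]
    by blast
  have "f v = 0" if "v \<in> V.span B" for v
    using that
  proof (induction rule: V.span_induct_alt)
    case base
    then show ?case using P.linear_0[OF f(1)] by (simp add: zero_fun_def)
  next
    case (step c x y)
    have "x \<noteq> d" using step dB V.span_base by blast
    have "f (scale_fun c x + y) = c * f x + f y"
      by (simp only: P.linear_add[OF f(1)] P.linear_scale[OF f(1)])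
    then show ?case using step f \<open>x \<noteq> d\<close> by (simp del: plus_fun_apply)
  qed
  then show ?thesis using f B(3) by (intro exI[of _ f]) auto
qed

lemma linear_functional_expand:
  fixes f :: "('i \<Rightarrow> rat) \<Rightarrow> rat"
  assumes lin: "Vector_Spaces.linear scale_fun ((*) :: rat \<Rightarrow> rat \<Rightarrow> rat) f" and "finite I"
    and "\<And>i. i \<notin> I \<Longrightarrow> v i = 0"
  shows "f v = (\<Sum>i\<in>I. v i * f (\<lambda>j. if j = i then 1 else 0))"
proof -
  interpret P: vector_space_pair "scale_fun :: rat \<Rightarrow> ('i \<Rightarrow> rat) \<Rightarrow> _" "(*) :: rat \<Rightarrow> rat \<Rightarrow> rat"
    by (rule vector_space_pair_scale_fun)
  have "v = (\<Sum>i\<in>I. scale_fun (v i) (\<lambda>j. if j = i then 1 else 0))"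
    using assms(2,3)
    by (auto simp: fun_eq_iff scale_fun_def sum_fun_apply if_distrib cong: if_cong)
  then have "f v = (\<Sum>i\<in>I. f (scale_fun (v i) (\<lambda>j. if j = i then 1 else 0)))"
    by (metis P.linear_sum[OF lin])
  then show ?thesis by (simp only: P.linear_scale[OF lin])
qed

lemma span_image_subset_lincomb:
  fixes v :: "'j \<Rightarrow> 'i \<Rightarrow> rat"
  assumes J: "finite J"
  shows "module.span scale_fun (v ` J) \<subseteq> range (\<lambda>r. \<Sum>j\<in>J. scale_fun (r j) (v j))"
proof -
  interpret V: vector_space "scale_fun :: rat \<Rightarrow> ('i \<Rightarrow> rat) \<Rightarrow> _" by (rule vector_space_scale_fun)
  define comb where "comb r = (\<Sum>j\<in>J. scale_fun (r j) (v j))" for r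
  have comb_apply: "comb r i = (\<Sum>j\<in>J. r j * v j i)" for r i
    by (simp add: comb_def sum_fun_apply scale_fun_def)
  have "V.subspace (range comb)"
    unfolding V.subspace_def
  proof (intro conjI ballI allI, safe)
    show "0 \<in> range comb"
      by (rule range_eqI[where x = "\<lambda>_. 0"]) (simp add: fun_eq_iff comb_apply)
    show "comb r + comb r' \<in> range comb" for r r'
      by (rule range_eqI[where x = "\<lambda>j. r j + r' j"])
        (simp add: fun_eq_iff comb_apply distrib_right sum.distrib)
    show "scale_fun c (comb r) \<in> range comb" for c r
      by (rule range_eqI[where x = "\<lambda>j. c * r j"])
        (simp add: fun_eq_iff comb_apply scale_fun_def sum_distrib_left mult.assoc)
  qed
  moreover have "v j0 \<in> range comb" if "j0 \<in> J" for j0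
    using J that by (intro range_eqI[where x = "\<lambda>j. if j = j0 then 1 else 0"])
      (simp add: fun_eq_iff comb_apply if_distrib[where f = "\<lambda>a. a * _"] cong: if_cong)
  ultimately show ?thesis
    unfolding comb_def[symmetric] by (intro V.span_minimal) auto
qed

lemma rat_linear_system_solvable:
  fixes C :: "'i \<Rightarrow> 'j \<Rightarrow> rat" and d :: "'i \<Rightarrow> rat"
  assumes I: "finite I" and J: "finite J"
    and orth: "\<And>m. (\<forall>j\<in>J. (\<Sum>i\<in>I. m i * C i j) = 0) \<Longrightarrow> (\<Sum>i\<in>I. m i * d i) = 0"
  shows "\<exists>r. \<forall>i\<in>I. (\<Sum>j\<in>J. r j * C i j) = d i"
proof -
  define col where "col j = (\<lambda>i. if i \<in> I then C i j else 0)" for j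
  define d' where "d' = (\<lambda>i. if i \<in> I then d i else 0)"
  show ?thesis
  proof (cases "d' \<in> module.span scale_fun (col ` J)")
    case True
    then obtain r where r: "d' = (\<Sum>j\<in>J. scale_fun (r j) (col j))"
      using span_image_subset_lincomb[OF J] by blast
    have "(\<Sum>j\<in>J. r j * C i j) = d i" if "i \<in> I" for i
      using fun_cong[OF r, of i] that by (simp add: sum_fun_apply scale_fun_def col_def d'_def)
    then show ?thesis by blast
  next
    case False
    then obtain f where f: "Vector_Spaces.linear scale_fun ((*) :: rat \<Rightarrow> rat \<Rightarrow> rat) f"
      "\<forall>v\<in>col ` J. f v = 0" "f d' = 1"
      using linear_functional_separating by blast
    define m where "m i = f (\<lambda>k. if k = i then 1 else 0)" for i
    have "(\<Sum>i\<in>I. m i * C i j) = 0" if j: "j \<in> J" for j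
    proof -
      have "f (col j) = (\<Sum>i\<in>I. col j i * m i)"
        unfolding m_def by (rule linear_functional_expand[OF f(1) I]) (simp add: col_def)
      then show ?thesis using f(2) j by (simp add: col_def mult.commute)
    qed
    then have "(\<Sum>i\<in>I. m i * d i) = 0" by (intro orth) blast
    moreover have "f d' = (\<Sum>i\<in>I. d' i * m i)"
      unfolding m_def by (rule linear_functional_expand[OF f(1) I]) (simp add: d'_def)
    ultimately show ?thesis using f(3) by (simp add: d'_def mult.commute)
  qed
qed

lemma common_denominator:
  fixes r :: "'x \<Rightarrow> rat"
  assumes "finite A"
  shows "\<exists>N::int. N > 0 \<and> (\<exists>k::'x \<Rightarrow> int. \<forall>b\<in>A. of_int N * r b = of_int (k b))"
  using assms
proof (induction A rule: finite_induct)
  case empty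
  show ?case by (rule exI[of _ 1]) simp
next
  case (insert b F)
  then obtain N k where N: "N > 0" "\<forall>b\<in>F. of_int N * r b = of_int (k b)" by blast
  obtain p q where pq: "quotient_of (r b) = (p, q)" by (cases "quotient_of (r b)")
  have q: "q > 0" and rb: "r b = of_int p / of_int q"
    using quotient_of_denom_pos[OF pq] quotient_of_div[OF pq] by auto
  have "\<forall>b'\<in>insert b F. of_int (N * q) * r b' = of_int (if b' = b then N * p else k b' * q)"
    using N(2) q rb by (auto simp: algebra_simps)
  then show ?case
    using N(1) q by (intro exI[of _ "N * q"] conjI exI[of _ "\<lambda>b'. if b' = b then N * p else k b' * q"]) auto
qed

section \<open>Homomorphisms to the integers\<close>

lemma homZ_iff: "f \<in> homZ G \<longleftrightarrow> f \<in> extensional (carrier G) \<and> f \<in> hom G integer_group"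
  by (auto simp: homZ_def hom_def)

lemma group_hom_homZ: "group G \<Longrightarrow> f \<in> homZ G \<Longrightarrow> group_hom G integer_group f"
  by (simp add: homZ_iff group_hom_def group_hom_axioms_def)

lemma homZ_eqI: "f \<in> homZ G \<Longrightarrow> g \<in> homZ G \<Longrightarrow> (\<And>x. x \<in> carrier G \<Longrightarrow> f x = g x) \<Longrightarrow> f = g"
  by (meson extensionalityI homZ_iff)

lemma homZ_restrict_comp:
  "group_hom G H p \<Longrightarrow> \<phi> \<in> hom H integer_group \<Longrightarrow> restrict (\<phi> \<circ> p) (carrier G) \<in> homZ G"
  by (auto simp: homZ_def hom_def group_hom_def group_hom_axioms_def monoid.m_closed group.is_monoid)

lemma homZ_group_carrier [simp]: "carrier (homZ_group G) = homZ G"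
  by (simp add: homZ_group_def)

lemma homZ_group_mult [simp]: "f \<otimes>\<^bsub>homZ_group G\<^esub> g = restrict (\<lambda>x. f x + g x) (carrier G)"
  by (simp add: homZ_group_def)

lemma homZ_group_one [simp]: "\<one>\<^bsub>homZ_group G\<^esub> = restrict (\<lambda>x. 0) (carrier G)"
  by (simp add: homZ_group_def)

lemma comm_group_homZ_group:
  assumes "group G" shows "comm_group (homZ_group G)"
proof -
  interpret G: group G by fact
  show ?thesis
proof (rule comm_groupI)
  fix f assume f: "f \<in> carrier (homZ_group G)"
  then show "\<one>\<^bsub>homZ_group G\<^esub> \<otimes>\<^bsub>homZ_group G\<^esub> f = f"
    by (auto simp: homZ_def fun_eq_iff extensional_def)
  show "\<exists>g\<in>carrier (homZ_group G). g \<otimes>\<^bsub>homZ_group G\<^esub> f = \<one>\<^bsub>homZ_group G\<^esub>"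
    using f by (intro bexI[of _ "restrict (\<lambda>x. - f x) (carrier G)"]) (auto simp: homZ_def)
qed (auto simp: homZ_def fun_eq_iff)
qed

lemma eval_hom_homZ_group: "x \<in> carrier G \<Longrightarrow> (\<lambda>f. f x) \<in> hom (homZ_group G) integer_group"
  by (rule homI) auto

lemma hom_onto_iso_restrict_carrier:
  "f \<in> hom G H \<Longrightarrow> inj_on f (carrier G) \<Longrightarrow> f ` carrier G = S \<Longrightarrow> f \<in> iso G (H\<lparr>carrier := S\<rparr>)"
  by (auto simp: iso_def hom_def bij_betw_def)

lemma (in group_hom) generate_subset_kernel:
  "S \<subseteq> carrier G \<Longrightarrow> (\<And>s. s \<in> S \<Longrightarrow> h s = \<one>\<^bsub>H\<^esub>) \<Longrightarrow> generate G S \<subseteq> kernel G H h"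
  by (rule G.generate_subgroup_incl[OF _ subgroup_kernel]) (auto simp: kernel_def)

lemma (in group_hom) induced_map_r_coset:
  assumes "g \<in> carrier G"
  shows "induced_map h (kernel G H h #> g) = h g"
proof -
  have "h ` (kernel G H h #> g) = {h g}"
    using assms by (auto simp: kernel_def r_coset_def intro!: imageI)
  then show ?thesis by (simp add: induced_map_def)
qed

lemma (in group_hom) induced_map_some_elem:
  assumes "C \<in> carrier (G Mod kernel G H h)"
  shows "(SOME x. x \<in> C) \<in> carrier G \<and> induced_map h C = h (SOME x. x \<in> C)"
proof -
  obtain g where g: "g \<in> carrier G" and C: "C = kernel G H h #> g"
    using assms by (auto simp: FactGroup_def RCOSETS_def)
  have "(SOME x. x \<in> C) \<in> C"
    using some_in_eq FactGroup_nonempty[OF assms] by blast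
  then obtain k where "k \<in> kernel G H h" "(SOME x. x \<in> C) = k \<otimes>\<^bsub>G\<^esub> g"
    unfolding C r_coset_def by blast
  then have "(SOME x. x \<in> C) \<in> carrier G" "h (SOME x. x \<in> C) = h g"
    using g by (auto simp: kernel_def)
  moreover have "induced_map h C = h g"
    using g by (simp add: C induced_map_r_coset)
  ultimately show ?thesis by simp
qed

lemma homZ_factor:
  assumes "group_hom G H p" and p_onto: "p ` carrier G = carrier H"
    and f: "f \<in> homZ G" and f_kernel: "\<And>k. k \<in> kernel G H p \<Longrightarrow> f k = 0"
  shows "\<exists>\<phi>\<in>homZ H. \<forall>g\<in>carrier G. f g = \<phi> (p g)"
proof -
  interpret p: group_hom G H p by fact
  interpret f: group_hom G integer_group f by (rule group_hom_homZ[OF p.G.group_axioms f])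
  have fibre: "f g = f g'" if g: "g \<in> carrier G" "g' \<in> carrier G" "p g = p g'" for g g'
  proof -
    have "g \<otimes>\<^bsub>G\<^esub> inv\<^bsub>G\<^esub> g' \<in> kernel G H p"
      using g by (simp add: kernel_def p.hom_mult p.hom_inv)
    moreover have "f (g \<otimes>\<^bsub>G\<^esub> inv\<^bsub>G\<^esub> g') = f g - f g'"
      using g by (simp add: f.hom_mult f.hom_inv)
    ultimately show ?thesis using f_kernel by fastforce
  qed
  define \<phi> where "\<phi> = restrict (\<lambda>x. f (inv_into (carrier G) p x)) (carrier H)"
  have f_eq: "f g = \<phi> (p g)" if "g \<in> carrier G" for g
    using that fibre[of g "inv_into (carrier G) p (p g)"]
    by (simp add: \<phi>_def inv_into_into f_inv_into_f)
  have "\<phi> \<in> homZ H"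
    unfolding homZ_def
  proof (intro CollectI conjI ballI)
    fix x y assume "x \<in> carrier H" "y \<in> carrier H"
    then obtain g g' where "g \<in> carrier G" "g' \<in> carrier G" "x = p g" "y = p g'"
      using p_onto by blast
    then show "\<phi> (x \<otimes>\<^bsub>H\<^esub> y) = \<phi> x + \<phi> y"
      using f_eq[of "g \<otimes>\<^bsub>G\<^esub> g'"] f_eq[of g] f_eq[of g'] by (simp add: f.hom_mult)
  qed (simp add: \<phi>_def)
  with f_eq show ?thesis by blast
qed

section \<open>Root data\<close>

locale root_data =
  fixes R :: "('a, 'b) root_datum"
  assumes root_datum: "root_datum R"
begin

sublocale X: comm_group "rd_X R"
  using root_datum by (simp add: root_datum_def)

sublocale Xc: comm_group "rd_Xc R"
  using root_datum by (simp add: root_datum_def)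

lemma pair_hom_left: "y \<in> carrier (rd_Xc R) \<Longrightarrow> group_hom (rd_X R) integer_group (\<lambda>x. rd_pair R x y)"
  using root_datum X.group_axioms
  by (auto simp: root_datum_def group_hom_def group_hom_axioms_def intro!: homI)

lemma pair_hom_right: "x \<in> carrier (rd_X R) \<Longrightarrow> group_hom (rd_Xc R) integer_group (rd_pair R x)"
  using root_datum Xc.group_axioms
  by (auto simp: root_datum_def group_hom_def group_hom_axioms_def intro!: homI)

lemma pair_one_left [simp]: "y \<in> carrier (rd_Xc R) \<Longrightarrow> rd_pair R \<one>\<^bsub>rd_X R\<^esub> y = 0"
  using group_hom.hom_one[OF pair_hom_left] by simp

lemma pair_one_right [simp]: "x \<in> carrier (rd_X R) \<Longrightarrow> rd_pair R x \<one>\<^bsub>rd_Xc R\<^esub> = 0"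
  using group_hom.hom_one[OF pair_hom_right] by simp

lemma pair_mult_left [simp]:
  "x \<in> carrier (rd_X R) \<Longrightarrow> x' \<in> carrier (rd_X R) \<Longrightarrow> y \<in> carrier (rd_Xc R) \<Longrightarrow>
    rd_pair R (x \<otimes>\<^bsub>rd_X R\<^esub> x') y = rd_pair R x y + rd_pair R x' y"
  using group_hom.hom_mult[OF pair_hom_left] by simp

lemma pair_mult_right [simp]:
  "x \<in> carrier (rd_X R) \<Longrightarrow> y \<in> carrier (rd_Xc R) \<Longrightarrow> y' \<in> carrier (rd_Xc R) \<Longrightarrow>
    rd_pair R x (y \<otimes>\<^bsub>rd_Xc R\<^esub> y') = rd_pair R x y + rd_pair R x y'"
  using group_hom.hom_mult[OF pair_hom_right] by simp

lemma pair_inv_left [simp]: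
  "x \<in> carrier (rd_X R) \<Longrightarrow> y \<in> carrier (rd_Xc R) \<Longrightarrow> rd_pair R (inv\<^bsub>rd_X R\<^esub> x) y = - rd_pair R x y"
  using group_hom.hom_inv[OF pair_hom_left] by simp

lemma pair_int_pow_left [simp]:
  "x \<in> carrier (rd_X R) \<Longrightarrow> y \<in> carrier (rd_Xc R) \<Longrightarrow>
    rd_pair R (x [^]\<^bsub>rd_X R\<^esub> (k::int)) y = k * rd_pair R x y"
  using group_hom.hom_int_pow[OF pair_hom_left] by simp

lemma pair_nat_pow_left [simp]:
  "x \<in> carrier (rd_X R) \<Longrightarrow> y \<in> carrier (rd_Xc R) \<Longrightarrow>
    rd_pair R (x [^]\<^bsub>rd_X R\<^esub> (n::nat)) y = int n * rd_pair R x y"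
  using group_hom.hom_nat_pow[OF pair_hom_left] by simp

lemma pair_int_pow_right [simp]:
  "x \<in> carrier (rd_X R) \<Longrightarrow> y \<in> carrier (rd_Xc R) \<Longrightarrow>
    rd_pair R x (y [^]\<^bsub>rd_Xc R\<^esub> (k::int)) = k * rd_pair R x y"
  using group_hom.hom_int_pow[OF pair_hom_right] by simp

lemma pair_nat_pow_right [simp]:
  "x \<in> carrier (rd_X R) \<Longrightarrow> y \<in> carrier (rd_Xc R) \<Longrightarrow>
    rd_pair R x (y [^]\<^bsub>rd_Xc R\<^esub> (n::nat)) = int n * rd_pair R x y"
  using group_hom.hom_nat_pow[OF pair_hom_right] by simp

lemma pair_left_eqI:
  "x \<in> carrier (rd_X R) \<Longrightarrow> x' \<in> carrier (rd_X R) \<Longrightarrow>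
    (\<And>y. y \<in> carrier (rd_Xc R) \<Longrightarrow> rd_pair R x y = rd_pair R x' y) \<Longrightarrow> x = x'"
  using root_datum unfolding root_datum_def bij_betw_def inj_on_def
  by (metis (no_types, lifting) restrict_ext)

lemma pair_right_eqI:
  "y \<in> carrier (rd_Xc R) \<Longrightarrow> y' \<in> carrier (rd_Xc R) \<Longrightarrow>
    (\<And>x. x \<in> carrier (rd_X R) \<Longrightarrow> rd_pair R x y = rd_pair R x y') \<Longrightarrow> y = y'"
  using root_datum unfolding root_datum_def bij_betw_def inj_on_def
  by (metis (no_types, lifting) restrict_ext)

lemma homZ_eq_pair_right:
  "\<phi> \<in> homZ (rd_X R) \<Longrightarrow> \<exists>y\<in>carrier (rd_Xc R). \<forall>x\<in>carrier (rd_X R). \<phi> x = rd_pair R x y"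
  using root_datum unfolding root_datum_def bij_betw_def
  by (metis (no_types, lifting) imageE restrict_apply')

lemma nat_pow_eq_one_imp_eq_one:
  assumes x: "x \<in> carrier (rd_X R)" and "(n::nat) > 0" and "x [^]\<^bsub>rd_X R\<^esub> n = \<one>\<^bsub>rd_X R\<^esub>"
  shows "x = \<one>\<^bsub>rd_X R\<^esub>"
proof (rule pair_left_eqI[OF x X.one_closed])
  fix y assume y: "y \<in> carrier (rd_Xc R)"
  have "int n * rd_pair R x y = 0"
    using pair_nat_pow_left[OF x y, of n] assms(3) y by simp
  with \<open>n > 0\<close> y show "rd_pair R x y = rd_pair R \<one>\<^bsub>rd_X R\<^esub> y" by simp
qed

lemma finite_roots: "finite (rd_Phi R)"
  using root_datum by (simp add: root_datum_def)

lemma roots_subset: "rd_Phi R \<subseteq> carrier (rd_X R)"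
  using root_datum by (simp add: root_datum_def)

lemma coroots_subset: "rd_Phic R \<subseteq> carrier (rd_Xc R)"
  using root_datum by (simp add: root_datum_def)

definition coroot :: "'a \<Rightarrow> 'b" where
  "coroot = (SOME c. bij_betw c (rd_Phi R) (rd_Phic R) \<and>
     (\<forall>a\<in>rd_Phi R. rd_pair R a (c a) = 2 \<and> refl_X R a (c a) ` rd_Phi R = rd_Phi R \<and>
        refl_Xc R a (c a) ` rd_Phic R = rd_Phic R))"

lemma coroot_spec:
  "bij_betw coroot (rd_Phi R) (rd_Phic R) \<and>
     (\<forall>a\<in>rd_Phi R. rd_pair R a (coroot a) = 2 \<and> refl_X R a (coroot a) ` rd_Phi R = rd_Phi R)"
proof -
  have "\<exists>c. bij_betw c (rd_Phi R) (rd_Phic R) \<and>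
     (\<forall>a\<in>rd_Phi R. rd_pair R a (c a) = 2 \<and> refl_X R a (c a) ` rd_Phi R = rd_Phi R \<and>
        refl_Xc R a (c a) ` rd_Phic R = rd_Phic R)"
    using root_datum unfolding root_datum_def by (elim conjE)
  then show ?thesis unfolding coroot_def by (rule someI2_ex) blast
qed

lemma coroot_bij: "bij_betw coroot (rd_Phi R) (rd_Phic R)"
  using coroot_spec by blast

lemma pair_root_coroot: "a \<in> rd_Phi R \<Longrightarrow> rd_pair R a (coroot a) = 2"
  using coroot_spec by blast

lemma reflection_permutes_roots: "a \<in> rd_Phi R \<Longrightarrow> refl_X R a (coroot a) ` rd_Phi R = rd_Phi R"
  using coroot_spec by blast

lemma coroot_in_carrier: "a \<in> rd_Phi R \<Longrightarrow> coroot a \<in> carrier (rd_Xc R)"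
  using coroot_bij coroots_subset by (auto simp: bij_betw_def)


lemma pair_reflection_left:
  assumes "a \<in> rd_Phi R" and "x \<in> carrier (rd_X R)" and "y \<in> carrier (rd_Xc R)"
  shows "rd_pair R (refl_X R a (coroot a) x) y = rd_pair R x y - rd_pair R x (coroot a) * rd_pair R a y"
  using assms roots_subset by (auto simp: refl_X_def)

text \<open>Reindex the sum by the reflection in a, which permutes the roots.\<close>
lemma sum_roots_pair_coroot:
  assumes a: "a \<in> rd_Phi R" and y: "y \<in> carrier (rd_Xc R)"
  shows "2 * (\<Sum>g\<in>rd_Phi R. rd_pair R g y * rd_pair R g (coroot a)) =
         rd_pair R a y * (\<Sum>g\<in>rd_Phi R. (rd_pair R g (coroot a))\<^sup>2)"
proof -
  let ?s = "refl_X R a (coroot a)"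
  define S where "S = (\<Sum>g\<in>rd_Phi R. rd_pair R g y * rd_pair R g (coroot a))"
  have perm: "?s ` rd_Phi R = rd_Phi R" by (rule reflection_permutes_roots[OF a])
  then have inj: "inj_on ?s (rd_Phi R)"
    by (intro eq_card_imp_inj_on[OF finite_roots]) simp
  have "S = (\<Sum>g\<in>?s ` rd_Phi R. rd_pair R g y * rd_pair R g (coroot a))"
    by (simp only: perm S_def)
  also have "\<dots> = (\<Sum>g\<in>rd_Phi R. rd_pair R (?s g) y * rd_pair R (?s g) (coroot a))"
    by (simp add: sum.reindex[OF inj])
  also have "\<dots> = (\<Sum>g\<in>rd_Phi R. rd_pair R a y * (rd_pair R g (coroot a))\<^sup>2 - rd_pair R g y * rd_pair R g (coroot a))"
    using a y roots_subset coroot_in_carrier[OF a]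
    by (intro sum.cong) (auto simp: pair_reflection_left pair_root_coroot algebra_simps power2_eq_square)
  also have "\<dots> = rd_pair R a y * (\<Sum>g\<in>rd_Phi R. (rd_pair R g (coroot a))\<^sup>2) - S"
    by (simp add: S_def sum_subtractf sum_distrib_left)
  finally show ?thesis unfolding S_def by linarith
qed

definition coroot_norm :: "'a \<Rightarrow> rat" where
  "coroot_norm a = (\<Sum>g\<in>rd_Phi R. (of_int (rd_pair R g (coroot a)))\<^sup>2)"

lemma coroot_norm_pos: "a \<in> rd_Phi R \<Longrightarrow> coroot_norm a > 0"
  using member_le_sum[of a "rd_Phi R" "\<lambda>g. (of_int (rd_pair R g (coroot a)) :: rat)\<^sup>2"]
  by (simp add: coroot_norm_def pair_root_coroot finite_roots)

lemma pair_root_eq_sum_coroot: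
  assumes a: "a \<in> rd_Phi R" and y: "y \<in> carrier (rd_Xc R)"
  shows "(of_int (rd_pair R a y) :: rat) =
     2 / coroot_norm a * (\<Sum>g\<in>rd_Phi R. of_int (rd_pair R g y) * of_int (rd_pair R g (coroot a)))"
proof -
  have "2 * (\<Sum>g\<in>rd_Phi R. of_int (rd_pair R g y) * of_int (rd_pair R g (coroot a))) =
      (of_int (rd_pair R a y) :: rat) * coroot_norm a"
    using arg_cong[OF sum_roots_pair_coroot[OF a y], of "of_int :: int \<Rightarrow> rat"]
    by (simp add: coroot_norm_def)
  then show ?thesis using coroot_norm_pos[OF a] by (simp add: field_simps)
qed

text \<open>With the weights W, the sum of the squares of the W g expands into the hypothesis, so W = 0.\<close>
lemma root_combination_vanishes:
  fixes m :: "'a \<Rightarrow> rat"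
  assumes coroots: "\<And>b. b \<in> rd_Phi R \<Longrightarrow> (\<Sum>a\<in>rd_Phi R. m a * of_int (rd_pair R a (coroot b))) = 0"
    and y: "y \<in> carrier (rd_Xc R)"
  shows "(\<Sum>a\<in>rd_Phi R. m a * of_int (rd_pair R a y)) = 0"
proof -
  define W where "W g = (\<Sum>a\<in>rd_Phi R. m a * (2 / coroot_norm a) * of_int (rd_pair R g (coroot a)))" for g
  have expand: "(\<Sum>a\<in>rd_Phi R. m a * of_int (rd_pair R a z)) = (\<Sum>g\<in>rd_Phi R. of_int (rd_pair R g z) * W g)"
    if "z \<in> carrier (rd_Xc R)" for z
  proof -
    have "(\<Sum>a\<in>rd_Phi R. m a * of_int (rd_pair R a z)) =
       (\<Sum>a\<in>rd_Phi R. \<Sum>g\<in>rd_Phi R. of_int (rd_pair R g z) * (m a * (2 / coroot_norm a) * of_int (rd_pair R g (coroot a))))"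
      using that by (simp add: pair_root_eq_sum_coroot sum_distrib_left mult_ac)
    also have "\<dots> = (\<Sum>g\<in>rd_Phi R. of_int (rd_pair R g z) * W g)"
      by (subst sum.swap) (simp add: W_def sum_distrib_left)
    finally show ?thesis .
  qed
  have "(\<Sum>g\<in>rd_Phi R. (W g)\<^sup>2) =
      (\<Sum>g\<in>rd_Phi R. \<Sum>a\<in>rd_Phi R. W g * (m a * (2 / coroot_norm a) * of_int (rd_pair R g (coroot a))))"
    by (simp add: power2_eq_square W_def sum_distrib_left)
  also have "\<dots> = (\<Sum>a\<in>rd_Phi R. m a * (2 / coroot_norm a) * (\<Sum>g\<in>rd_Phi R. of_int (rd_pair R g (coroot a)) * W g))"
    by (subst sum.swap) (simp add: sum_distrib_left mult_ac)
  also have "\<dots> = (\<Sum>a\<in>rd_Phi R. m a * (2 / coroot_norm a) * (\<Sum>b\<in>rd_Phi R. m b * of_int (rd_pair R b (coroot a))))"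
    by (intro sum.cong refl) (simp add: expand[OF coroot_in_carrier])
  also have "\<dots> = 0"
    using coroots by simp
  finally have "\<forall>g\<in>rd_Phi R. W g = 0"
    using sum_nonneg_eq_0_iff[OF finite_roots, of "\<lambda>g. (W g)\<^sup>2"] by simp
  then show ?thesis by (simp add: expand[OF y])
qed


lemma pair_generate_roots:
  assumes "z \<in> generate (rd_X R) (rd_Phi R)"
  shows "\<exists>m::'a \<Rightarrow> int. \<forall>y\<in>carrier (rd_Xc R). rd_pair R z y = (\<Sum>a\<in>rd_Phi R. m a * rd_pair R a y)"
  using assms
proof (induction rule: generate.induct)
  case one
  show ?case by (intro exI[of _ "\<lambda>_. 0"]) simp
next
  case (incl g)
  then show ?case
    by (intro exI[of _ "\<lambda>a. if a = g then 1 else 0"])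
      (simp add: if_distrib[where f = "\<lambda>k. k * _"] finite_roots cong: if_cong)
next
  case (inv g)
  then show ?case
    using roots_subset
    by (intro exI[of _ "\<lambda>a. if a = g then -1 else 0"])
      (auto simp: if_distrib[where f = "\<lambda>k. k * _"] finite_roots cong: if_cong)
next
  case (eng g g')
  then obtain m m' where
    "\<forall>y\<in>carrier (rd_Xc R). rd_pair R g y = (\<Sum>a\<in>rd_Phi R. m a * rd_pair R a y)"
    "\<forall>y\<in>carrier (rd_Xc R). rd_pair R g' y = (\<Sum>a\<in>rd_Phi R. m' a * rd_pair R a y)"
    by blast
  moreover have "g \<in> carrier (rd_X R)" "g' \<in> carrier (rd_X R)"
    using eng.hyps X.generate_in_carrier[OF roots_subset] by auto
  ultimately show ?case
    by (intro exI[of _ "\<lambda>a. m a + m' a"]) (simp add: distrib_right sum.distrib)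
qed

lemma coroot_combination_in_generate:
  assumes "finite F" "F \<subseteq> rd_Phi R"
  shows "\<exists>z\<in>generate (rd_Xc R) (rd_Phic R).
    \<forall>x\<in>carrier (rd_X R). rd_pair R x z = (\<Sum>b\<in>F. k b * rd_pair R x (coroot b))"
  using assms
proof (induction F rule: finite_induct)
  case empty
  show ?case by (intro bexI[of _ "\<one>\<^bsub>rd_Xc R\<^esub>"] generate.one) simp
next
  case (insert b F)
  then obtain z where z: "z \<in> generate (rd_Xc R) (rd_Phic R)"
    "\<forall>x\<in>carrier (rd_X R). rd_pair R x z = (\<Sum>b\<in>F. k b * rd_pair R x (coroot b))"
    by auto
  have b: "b \<in> rd_Phi R" using insert.prems by blast
  then have "coroot b \<in> rd_Phic R" using coroot_bij by (auto simp: bij_betw_def)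
  then have "coroot b [^]\<^bsub>rd_Xc R\<^esub> k b \<in> generate (rd_Xc R) (rd_Phic R)"
    by (intro Xc.subgroup_int_pow_closed Xc.generate_is_subgroup coroots_subset generate.incl)
  with z(1) have "z \<otimes>\<^bsub>rd_Xc R\<^esub> coroot b [^]\<^bsub>rd_Xc R\<^esub> k b \<in> generate (rd_Xc R) (rd_Phic R)"
    by (rule generate.eng)
  moreover have "z \<in> carrier (rd_Xc R)"
    by (rule Xc.generate_in_carrier[OF coroots_subset z(1)])
  ultimately show ?case
    using insert.hyps z(2) coroot_in_carrier[OF b] by (intro bexI) auto
qed

text \<open>The rational coefficients come from the Fredholm alternative, whose obstruction is
  excluded by root_combination_vanishes; clearing denominators makes them integral.\<close>
lemma coroot_combination_on_roots:
  assumes y: "y \<in> carrier (rd_Xc R)"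
  obtains N :: int and k :: "'a \<Rightarrow> int" where "N > 0"
    "\<And>g. g \<in> rd_Phi R \<Longrightarrow> (\<Sum>b\<in>rd_Phi R. k b * rd_pair R g (coroot b)) = N * rd_pair R g y"
proof -
  have "\<exists>r. \<forall>g\<in>rd_Phi R. (\<Sum>b\<in>rd_Phi R. r b * (of_int (rd_pair R g (coroot b)) :: rat)) = of_int (rd_pair R g y)"
    by (rule rat_linear_system_solvable[OF finite_roots finite_roots])
      (rule root_combination_vanishes[OF _ y], blast)
  then obtain r where r: "\<And>g. g \<in> rd_Phi R \<Longrightarrow>
      (\<Sum>b\<in>rd_Phi R. r b * (of_int (rd_pair R g (coroot b)) :: rat)) = of_int (rd_pair R g y)"
    by blast
  obtain N :: int and k where N: "N > 0" and k: "\<And>b. b \<in> rd_Phi R \<Longrightarrow> of_int N * r b = of_int (k b)"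
    using common_denominator[OF finite_roots, of r] by blast
  have "(\<Sum>b\<in>rd_Phi R. k b * rd_pair R g (coroot b)) = N * rd_pair R g y" if g: "g \<in> rd_Phi R" for g
  proof -
    have "(of_int (\<Sum>b\<in>rd_Phi R. k b * rd_pair R g (coroot b)) :: rat) =
        (\<Sum>b\<in>rd_Phi R. of_int N * (r b * of_int (rd_pair R g (coroot b))))"
      by (auto simp: k mult.assoc[symmetric] intro!: sum.cong)
    also have "\<dots> = of_int (N * rd_pair R g y)"
      using r[OF g] by (simp add: sum_distrib_left[symmetric])
    finally show ?thesis by (simp only: of_int_eq_iff)
  qed
  with N show thesis by (rule that)
qed

end

section \<open>Semisimple root data\<close>

locale semisimple_root_data = root_data +
  assumes semisimple: "semisimple R"
begin

lemma pair_multiple_root_combination: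
  assumes "x \<in> carrier (rd_X R)"
  obtains n :: nat and m :: "'a \<Rightarrow> int"
  where "n > 0" "\<And>y. y \<in> carrier (rd_Xc R) \<Longrightarrow> int n * rd_pair R x y = (\<Sum>a\<in>rd_Phi R. m a * rd_pair R a y)"
proof -
  obtain n :: nat where n: "n > 0" "x [^]\<^bsub>rd_X R\<^esub> n \<in> generate (rd_X R) (rd_Phi R)"
    using semisimple assms unfolding semisimple_def top_X_def by blast
  then obtain m where "\<forall>y\<in>carrier (rd_Xc R). rd_pair R (x [^]\<^bsub>rd_X R\<^esub> n) y = (\<Sum>a\<in>rd_Phi R. m a * rd_pair R a y)"
    using pair_generate_roots by blast
  with n(1) assms show thesis by (intro that) auto
qed

lemma eq_one_if_pair_coroots_zero:
  assumes x: "x \<in> carrier (rd_X R)" and zero: "\<And>a. a \<in> rd_Phi R \<Longrightarrow> rd_pair R x (coroot a) = 0"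
  shows "x = \<one>\<^bsub>rd_X R\<^esub>"
proof -
  obtain n :: nat and m where n: "n > 0"
    and m: "\<And>y. y \<in> carrier (rd_Xc R) \<Longrightarrow> int n * rd_pair R x y = (\<Sum>a\<in>rd_Phi R. m a * rd_pair R a y)"
    using pair_multiple_root_combination[OF x] by blast
  have "(\<Sum>a\<in>rd_Phi R. of_int (m a) * of_int (rd_pair R a y) :: rat) = 0" if y: "y \<in> carrier (rd_Xc R)" for y
  proof (rule root_combination_vanishes[OF _ y])
    fix b assume "b \<in> rd_Phi R"
    then have "(\<Sum>a\<in>rd_Phi R. m a * rd_pair R a (coroot b)) = 0"
      using m[OF coroot_in_carrier] zero by simp
    then have "(of_int (\<Sum>a\<in>rd_Phi R. m a * rd_pair R a (coroot b)) :: rat) = 0"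
      by (simp only: of_int_0)
    then show "(\<Sum>a\<in>rd_Phi R. of_int (m a) * of_int (rd_pair R a (coroot b)) :: rat) = 0"
      by simp
  qed
  then have "(of_int (\<Sum>a\<in>rd_Phi R. m a * rd_pair R a y) :: rat) = 0" if "y \<in> carrier (rd_Xc R)" for y
    using that by simp
  then have "int n * rd_pair R x y = 0" if "y \<in> carrier (rd_Xc R)" for y
    using m[OF that] that by (simp only: of_int_eq_0_iff)
  with n show ?thesis by (intro pair_left_eqI[OF x X.one_closed]) simp
qed

lemma nat_pow_in_generate_coroots:
  assumes y: "y \<in> carrier (rd_Xc R)"
  shows "\<exists>n::nat. n > 0 \<and> y [^]\<^bsub>rd_Xc R\<^esub> n \<in> generate (rd_Xc R) (rd_Phic R)"
proof -
  obtain N :: int and k where N: "N > 0"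
    and k: "\<And>g. g \<in> rd_Phi R \<Longrightarrow> (\<Sum>b\<in>rd_Phi R. k b * rd_pair R g (coroot b)) = N * rd_pair R g y"
    using coroot_combination_on_roots[OF y] by blast
  obtain z where z: "z \<in> generate (rd_Xc R) (rd_Phic R)"
    and pair_z: "\<And>x. x \<in> carrier (rd_X R) \<Longrightarrow> rd_pair R x z = (\<Sum>b\<in>rd_Phi R. k b * rd_pair R x (coroot b))"
    using coroot_combination_in_generate[OF finite_roots subset_refl, of k] by blast
  have z_carrier: "z \<in> carrier (rd_Xc R)"
    by (rule Xc.generate_in_carrier[OF coroots_subset z])
  have roots: "rd_pair R g z = N * rd_pair R g y" if "g \<in> rd_Phi R" for g
    using that roots_subset by (auto simp: pair_z k)
  have "z = y [^]\<^bsub>rd_Xc R\<^esub> nat N"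
  proof (rule pair_right_eqI[OF z_carrier Xc.nat_pow_closed[OF y]])
    fix x assume x: "x \<in> carrier (rd_X R)"
    obtain n :: nat and m where n: "n > 0"
      and m: "\<And>y. y \<in> carrier (rd_Xc R) \<Longrightarrow> int n * rd_pair R x y = (\<Sum>a\<in>rd_Phi R. m a * rd_pair R a y)"
      using pair_multiple_root_combination[OF x] by blast
    have "int n * rd_pair R x z = (\<Sum>a\<in>rd_Phi R. m a * rd_pair R a z)"
      by (rule m[OF z_carrier])
    also have "\<dots> = (\<Sum>a\<in>rd_Phi R. m a * rd_pair R a (y [^]\<^bsub>rd_Xc R\<^esub> nat N))"
      using N y roots_subset by (intro sum.cong refl) (auto simp: roots)
    also have "\<dots> = int n * rd_pair R x (y [^]\<^bsub>rd_Xc R\<^esub> nat N)"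
      using y by (simp add: m)
    finally show "rd_pair R x z = rd_pair R x (y [^]\<^bsub>rd_Xc R\<^esub> nat N)"
      using n by simp
  qed
  with z N show ?thesis by (intro exI[of _ "nat N"]) simp
qed

end

section \<open>Central product of a semisimple root datum and a torus\<close>

lemma subgroup_equalizer:
  assumes "group_hom G H f" "group_hom G H g"
  shows "subgroup {x \<in> carrier G. f x = g x} G"
proof -
  interpret f: group_hom G H f by fact
  interpret g: group_hom G H g by fact
  show ?thesis
    by (rule f.G.subgroupI) (auto simp: f.hom_inv g.hom_inv f.hom_mult g.hom_mult)
qed

locale torus_central_product =
  R: semisimple_root_data R + T: root_data T
  for R :: "('a, 'b) root_datum" and T :: "('c, 'd) root_datum" +
  fixes A :: "'e monoid" and h1 :: "'a \<Rightarrow> 'e" and h2 :: "'c \<Rightarrow> 'e"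
  assumes torus: "rd_torus T"
    and comm_group_A: "comm_group A"
    and h1: "h1 \<in> hom (rd_X R) A" and h1_onto: "h1 ` carrier (rd_X R) = carrier A"
    and h2: "h2 \<in> hom (rd_X T) A" and h2_onto: "h2 ` carrier (rd_X T) = carrier A"
    and roots_kernel_h1: "rd_Phi R \<subseteq> kernel (rd_X R) A h1"
begin

sublocale A: comm_group A by (rule comm_group_A)

sublocale H1: group_hom "rd_X R" A h1
  using h1 by (simp add: group_hom_def group_hom_axioms_def R.X.group_axioms A.group_axioms)

sublocale H2: group_hom "rd_X T" A h2
  using h2 by (simp add: group_hom_def group_hom_axioms_def T.X.group_axioms A.group_axioms)

abbreviation "G \<equiv> rd_X R \<times>\<times> rd_X T"

definition B :: "('a \<times> 'c) set" where
  "B = {(x, t). x \<in> carrier (rd_X R) \<and> t \<in> carrier (rd_X T) \<and> h1 x = h2 t}"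

definition XB :: "('a \<times> 'c) monoid" where
  "XB = G\<lparr>carrier := B\<rparr>"

definition dual_fst :: "'b \<Rightarrow> 'a \<times> 'c \<Rightarrow> int" where
  "dual_fst y = restrict (\<lambda>b. rd_pair R (fst b) y) B"

definition dual_snd :: "'d \<Rightarrow> 'a \<times> 'c \<Rightarrow> int" where
  "dual_snd y = restrict (\<lambda>b. rd_pair T (snd b) y) B"

abbreviation "R' \<equiv> central_prod R T h1 h2"

lemma B_iff: "(x, t) \<in> B \<longleftrightarrow> x \<in> carrier (rd_X R) \<and> t \<in> carrier (rd_X T) \<and> h1 x = h2 t"
  by (simp add: B_def)

lemma B_D: "b \<in> B \<Longrightarrow> fst b \<in> carrier (rd_X R) \<and> snd b \<in> carrier (rd_X T) \<and> h1 (fst b) = h2 (snd b)"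
  by (auto simp: B_def)

lemma root_in_B: "a \<in> rd_Phi R \<Longrightarrow> (a, \<one>\<^bsub>rd_X T\<^esub>) \<in> B"
  using roots_kernel_h1 by (auto simp: B_def kernel_def)

lemma subgroup_B: "subgroup B G"
proof -
  have "group G" by (rule DirProd_group[OF R.X.group_axioms T.X.group_axioms])
  then have "group_hom G A (h1 \<circ> fst)" "group_hom G A (h2 \<circ> snd)"
    using h1 h2 by (auto simp: group_hom_def group_hom_axioms_def hom_def mult_DirProd')
  moreover have "B = {b \<in> carrier G. (h1 \<circ> fst) b = (h2 \<circ> snd) b}"
    by (auto simp: B_def)
  ultimately show ?thesis by (simp only: subgroup_equalizer)
qed

lemma group_XB: "group XB"
  unfolding XB_def by (rule subgroup.subgroup_is_group[OF subgroup_B DirProd_group[OF R.X.group_axioms T.X.group_axioms]])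

lemma XB_carrier [simp]: "carrier XB = B"
  by (simp add: XB_def)

lemma XB_mult [simp]: "b \<otimes>\<^bsub>XB\<^esub> b' = (fst b \<otimes>\<^bsub>rd_X R\<^esub> fst b', snd b \<otimes>\<^bsub>rd_X T\<^esub> snd b')"
  by (simp add: XB_def mult_DirProd')

lemma XB_one [simp]: "\<one>\<^bsub>XB\<^esub> = (\<one>\<^bsub>rd_X R\<^esub>, \<one>\<^bsub>rd_X T\<^esub>)"
  by (simp add: XB_def)

lemma fst_hom: "group_hom XB (rd_X R) fst"
  using group_XB R.X.group_axioms
  by (auto simp: group_hom_def group_hom_axioms_def hom_def dest: B_D)

lemma snd_hom: "group_hom XB (rd_X T) snd"
  using group_XB T.X.group_axioms
  by (auto simp: group_hom_def group_hom_axioms_def hom_def dest: B_D)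

lemma fst_onto: "fst ` B = carrier (rd_X R)"
proof (intro equalityI subsetI)
  fix x assume x: "x \<in> carrier (rd_X R)"
  then obtain t where "t \<in> carrier (rd_X T)" "h1 x = h2 t"
    using h1_onto h2_onto by (metis H1.hom_closed imageE)
  with x show "x \<in> fst ` B" by (force simp: B_def)
qed (auto dest: B_D)

lemma snd_onto: "snd ` B = carrier (rd_X T)"
proof (intro equalityI subsetI)
  fix t assume t: "t \<in> carrier (rd_X T)"
  then obtain x where "x \<in> carrier (rd_X R)" "h1 x = h2 t"
    using h1_onto h2_onto by (metis H2.hom_closed imageE)
  with t show "t \<in> snd ` B" by (force simp: B_def)
qed (auto dest: B_D)

lemma central_prod_X: "rd_X R' = XB"
  by (simp add: central_prod_def rd_induced_def rd_sum_def XB_def B_def)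

lemma central_prod_Phi: "rd_Phi R' = (\<lambda>a. (a, \<one>\<^bsub>rd_X T\<^esub>)) ` rd_Phi R"
  using torus by (simp add: central_prod_def rd_induced_def rd_sum_def rd_torus_def)

lemma central_prod_Xc: "rd_Xc R' = homZ_group XB"
  by (simp add: central_prod_def rd_induced_def rd_sum_def XB_def B_def)

lemma central_prod_pair: "rd_pair R' = (\<lambda>b f. f b)"
  by (simp add: central_prod_def rd_induced_def)

lemma central_prod_Phic: "rd_Phic R' = dual_fst ` rd_Phic R"
proof -
  have "restrict (\<lambda>b. rd_pair R (fst b) y + rd_pair T (snd b) \<one>\<^bsub>rd_Xc T\<^esub>) B = dual_fst y" for y
    unfolding dual_fst_def by (rule restrict_ext) (simp add: B_D)
  then show ?thesis
    using torus by (simp add: central_prod_def rd_induced_def rd_sum_def rd_torus_def B_def[symmetric]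
        image_image case_prod_beta)
qed

lemma roots_B: "rd_Phi R' \<subseteq> B"
  by (auto simp: central_prod_Phi root_in_B)

lemma perp_coroots_eq_kernel_fst: "perp_Xc R' (rd_Phic R') = kernel XB (rd_X R) fst"
proof -
  have "(\<forall>y\<in>rd_Phic R. rd_pair R x y = 0) \<longleftrightarrow> x = \<one>\<^bsub>rd_X R\<^esub>" if x: "x \<in> carrier (rd_X R)" for x
  proof
    assume "\<forall>y\<in>rd_Phic R. rd_pair R x y = 0"
    then show "x = \<one>\<^bsub>rd_X R\<^esub>"
      using R.coroot_bij x by (intro R.eq_one_if_pair_coroots_zero) (auto simp: bij_betw_def)
  qed (use R.coroots_subset in auto)
  then show ?thesis
    by (auto simp: perp_Xc_def kernel_def central_prod_X central_prod_Phic central_prod_pair dual_fst_def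
        dest: B_D)
qed

lemma top_roots_eq_kernel_snd: "top_X R' (rd_Phi R') = kernel XB (rd_X T) snd"
proof -
  have gen_snd: "generate XB (rd_Phi R') \<subseteq> kernel XB (rd_X T) snd"
    by (rule group_hom.generate_subset_kernel[OF snd_hom]) (auto simp: central_prod_Phi root_in_B)
  have "b \<in> top_X R' (rd_Phi R') \<longleftrightarrow> snd b = \<one>\<^bsub>rd_X T\<^esub>" if b: "b \<in> B" for b
  proof
    assume "b \<in> top_X R' (rd_Phi R')"
    then obtain n :: nat where "n > 0" "b [^]\<^bsub>XB\<^esub> n \<in> generate XB (rd_Phi R')"
      by (auto simp: top_X_def central_prod_X)
    moreover from this have "snd (b [^]\<^bsub>XB\<^esub> n) = \<one>\<^bsub>rd_X T\<^esub>"
      using gen_snd by (auto simp: kernel_def)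
    then have "snd b [^]\<^bsub>rd_X T\<^esub> n = \<one>\<^bsub>rd_X T\<^esub>"
      using group_hom.hom_nat_pow[OF snd_hom] b by simp
    ultimately show "snd b = \<one>\<^bsub>rd_X T\<^esub>"
      using T.nat_pow_eq_one_imp_eq_one b by (blast dest: B_D)
  next
    assume snd_b: "snd b = \<one>\<^bsub>rd_X T\<^esub>"
    obtain n :: nat where n: "n > 0" "fst b [^]\<^bsub>rd_X R\<^esub> n \<in> generate (rd_X R) (rd_Phi R)"
      using R.semisimple b B_D unfolding semisimple_def top_X_def by blast
    have "fst ` rd_Phi R' = rd_Phi R"
      by (force simp: central_prod_Phi)
    then obtain c where c: "c \<in> generate XB (rd_Phi R')" "fst c = fst b [^]\<^bsub>rd_X R\<^esub> n"
      using n(2) group_hom.generate_img[OF fst_hom] roots_B by (metis XB_carrier imageE)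
    have "snd c = \<one>\<^bsub>rd_X T\<^esub>"
      using c(1) gen_snd by (auto simp: kernel_def)
    then have "c = b [^]\<^bsub>XB\<^esub> n"
      using c(2) snd_b b group_hom.hom_nat_pow[OF fst_hom] group_hom.hom_nat_pow[OF snd_hom]
      by (simp add: prod_eq_iff)
    with c(1) n(1) show "b \<in> top_X R' (rd_Phi R')"
      using b by (auto simp: top_X_def central_prod_X)
  qed
  then show ?thesis
    by (auto simp: kernel_def top_X_def central_prod_X)
qed


lemma kernel_h1_fst: "kernel XB A (h1 \<circ> fst) = kernel XB (rd_X T) snd <#>\<^bsub>XB\<^esub> kernel XB (rd_X R) fst"
proof (intro equalityI subsetI)
  fix b assume "b \<in> kernel XB A (h1 \<circ> fst)"
  then obtain x t where b: "b = (x, t)" "(x, t) \<in> B" "h1 x = \<one>\<^bsub>A\<^esub>"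
    by (cases b) (auto simp: kernel_def)
  then have "(x, \<one>\<^bsub>rd_X T\<^esub>) \<in> kernel XB (rd_X T) snd" "(\<one>\<^bsub>rd_X R\<^esub>, t) \<in> kernel XB (rd_X R) fst"
    by (auto simp: kernel_def B_iff)
  moreover have "b = (x, \<one>\<^bsub>rd_X T\<^esub>) \<otimes>\<^bsub>XB\<^esub> (\<one>\<^bsub>rd_X R\<^esub>, t)"
    using b by (simp add: B_iff)
  ultimately show "b \<in> kernel XB (rd_X T) snd <#>\<^bsub>XB\<^esub> kernel XB (rd_X R) fst"
    unfolding set_mult_def by blast
next
  fix b assume "b \<in> kernel XB (rd_X T) snd <#>\<^bsub>XB\<^esub> kernel XB (rd_X R) fst"
  then obtain u v where u: "u \<in> B" "snd u = \<one>\<^bsub>rd_X T\<^esub>" and v: "v \<in> B" "fst v = \<one>\<^bsub>rd_X R\<^esub>"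
    and b: "b = u \<otimes>\<^bsub>XB\<^esub> v"
    unfolding set_mult_def kernel_def by auto
  have "b \<in> B"
    using subgroup.m_closed[OF subgroup_B u(1) v(1)] b by (simp add: mult_DirProd')
  moreover have "h1 (fst b) = \<one>\<^bsub>A\<^esub>"
    using b u v B_D[OF u(1)] by simp
  ultimately show "b \<in> kernel XB A (h1 \<circ> fst)" by (simp add: kernel_def)
qed

lemma kernel_h2_snd: "kernel XB A (h2 \<circ> snd) = kernel XB A (h1 \<circ> fst)"
  by (auto simp: kernel_def dest: B_D)

lemma kernel_snd_inter_kernel_fst: "kernel XB (rd_X T) snd \<inter> kernel XB (rd_X R) fst = {\<one>\<^bsub>XB\<^esub>}"
  by (auto simp: kernel_def B_def)

lemma induced_map_h1_fst_iso: "induced_map (h1 \<circ> fst) \<in> iso (XB Mod kernel XB A (h1 \<circ> fst)) A"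
proof -
  have "group_hom XB A (h1 \<circ> fst)"
    using group_XB A.group_axioms by (auto simp: group_hom_def group_hom_axioms_def hom_def B_iff)
  moreover have "(h1 \<circ> fst) ` carrier XB = carrier A"
    by (simp only: XB_carrier image_comp[symmetric] fst_onto h1_onto)
  ultimately show ?thesis
    unfolding induced_map_def[abs_def] by (rule group_hom.FactGroup_iso_set)
qed

lemma dual_fst_apply: "b \<in> B \<Longrightarrow> dual_fst y b = rd_pair R (fst b) y"
  by (simp add: dual_fst_def)

lemma dual_snd_apply: "b \<in> B \<Longrightarrow> dual_snd y b = rd_pair T (snd b) y"
  by (simp add: dual_snd_def)

lemma dual_fst_homZ: "y \<in> carrier (rd_Xc R) \<Longrightarrow> dual_fst y \<in> homZ XB"
  using homZ_restrict_comp[OF fst_hom, of "\<lambda>x. rd_pair R x y"] R.pair_hom_left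
  by (simp add: dual_fst_def group_hom.homh comp_def)

lemma dual_snd_homZ: "y \<in> carrier (rd_Xc T) \<Longrightarrow> dual_snd y \<in> homZ XB"
  using homZ_restrict_comp[OF snd_hom, of "\<lambda>t. rd_pair T t y"] T.pair_hom_left
  by (simp add: dual_snd_def group_hom.homh comp_def)

lemma dual_fst_hom: "group_hom (rd_Xc R) (homZ_group XB) dual_fst"
proof -
  have "dual_fst \<in> hom (rd_Xc R) (homZ_group XB)"
    by (rule homI) (simp add: dual_fst_homZ, auto simp: dual_fst_def fun_eq_iff B_iff)
  then show ?thesis
    using R.Xc.group_axioms comm_group.axioms(2)[OF comm_group_homZ_group[OF group_XB]]
    by (simp add: group_hom_def group_hom_axioms_def)
qed

lemma dual_snd_hom: "group_hom (rd_Xc T) (homZ_group XB) dual_snd"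
proof -
  have "dual_snd \<in> hom (rd_Xc T) (homZ_group XB)"
    by (rule homI) (simp add: dual_snd_homZ, auto simp: dual_snd_def fun_eq_iff B_iff)
  then show ?thesis
    using T.Xc.group_axioms comm_group.axioms(2)[OF comm_group_homZ_group[OF group_XB]]
    by (simp add: group_hom_def group_hom_axioms_def)
qed

lemma inj_on_dual_fst: "inj_on dual_fst (carrier (rd_Xc R))"
proof (rule inj_onI)
  fix y y' assume y: "y \<in> carrier (rd_Xc R)" "y' \<in> carrier (rd_Xc R)" and eq: "dual_fst y = dual_fst y'"
  show "y = y'"
  proof (rule R.pair_right_eqI[OF y])
    fix x assume "x \<in> carrier (rd_X R)"
    then obtain b where "b \<in> B" "x = fst b" using fst_onto by blast
    with fun_cong[OF eq, of b] show "rd_pair R x y = rd_pair R x y'" by (simp add: dual_fst_def)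
  qed
qed

lemma inj_on_dual_snd: "inj_on dual_snd (carrier (rd_Xc T))"
proof (rule inj_onI)
  fix y y' assume y: "y \<in> carrier (rd_Xc T)" "y' \<in> carrier (rd_Xc T)" and eq: "dual_snd y = dual_snd y'"
  show "y = y'"
  proof (rule T.pair_right_eqI[OF y])
    fix t assume "t \<in> carrier (rd_X T)"
    then obtain b where "b \<in> B" "t = snd b" using snd_onto by blast
    with fun_cong[OF eq, of b] show "rd_pair T t y = rd_pair T t y'" by (simp add: dual_snd_def)
  qed
qed

lemma homZ_eq_dual_fst:
  assumes f: "f \<in> homZ XB" and "\<And>k. k \<in> kernel XB (rd_X R) fst \<Longrightarrow> f k = 0"
  shows "f \<in> dual_fst ` carrier (rd_Xc R)"
proof -
  obtain \<phi> where \<phi>: "\<phi> \<in> homZ (rd_X R)" "\<forall>b\<in>B. f b = \<phi> (fst b)"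
    using homZ_factor[OF fst_hom _ f] fst_onto assms(2) by auto
  obtain y where y: "y \<in> carrier (rd_Xc R)" "\<forall>x\<in>carrier (rd_X R). \<phi> x = rd_pair R x y"
    using R.homZ_eq_pair_right[OF \<phi>(1)] by blast
  have "f = dual_fst y"
    using \<phi>(2) y(2) by (intro homZ_eqI[OF f dual_fst_homZ[OF y(1)]]) (simp add: dual_fst_def B_D)
  with y(1) show ?thesis by blast
qed

lemma homZ_eq_dual_snd:
  assumes f: "f \<in> homZ XB" and "\<And>k. k \<in> kernel XB (rd_X T) snd \<Longrightarrow> f k = 0"
  shows "f \<in> dual_snd ` carrier (rd_Xc T)"
proof -
  obtain \<phi> where \<phi>: "\<phi> \<in> homZ (rd_X T)" "\<forall>b\<in>B. f b = \<phi> (snd b)"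
    using homZ_factor[OF snd_hom _ f] snd_onto assms(2) by auto
  obtain y where y: "y \<in> carrier (rd_Xc T)" "\<forall>t\<in>carrier (rd_X T). \<phi> t = rd_pair T t y"
    using T.homZ_eq_pair_right[OF \<phi>(1)] by blast
  have "f = dual_snd y"
    using \<phi>(2) y(2) by (intro homZ_eqI[OF f dual_snd_homZ[OF y(1)]]) (simp add: dual_snd_def B_D)
  with y(1) show ?thesis by blast
qed


lemma dual_fst_image: "dual_fst ` carrier (rd_Xc R) = top_Xc R' (rd_Phic R')"
proof (intro equalityI subsetI)
  fix f assume "f \<in> dual_fst ` carrier (rd_Xc R)"
  then obtain y where y: "y \<in> carrier (rd_Xc R)" and f: "f = dual_fst y" by blast
  obtain n :: nat where n: "n > 0" "y [^]\<^bsub>rd_Xc R\<^esub> n \<in> generate (rd_Xc R) (rd_Phic R)"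
    using R.nat_pow_in_generate_coroots[OF y] by blast
  have "f [^]\<^bsub>homZ_group XB\<^esub> n = dual_fst (y [^]\<^bsub>rd_Xc R\<^esub> n)"
    using y by (simp add: f group_hom.hom_nat_pow[OF dual_fst_hom])
  also have "\<dots> \<in> generate (homZ_group XB) (dual_fst ` rd_Phic R)"
    using n(2) group_hom.generate_img[OF dual_fst_hom R.coroots_subset] by blast
  finally show "f \<in> top_Xc R' (rd_Phic R')"
    using n(1) y by (auto simp: top_Xc_def central_prod_Xc central_prod_Phic f dual_fst_homZ)
next
  fix f assume "f \<in> top_Xc R' (rd_Phic R')"
  then obtain n :: nat where f: "f \<in> homZ XB" and n: "n > 0"
    and gen: "f [^]\<^bsub>homZ_group XB\<^esub> n \<in> generate (homZ_group XB) (dual_fst ` rd_Phic R)"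
    by (auto simp: top_Xc_def central_prod_Xc central_prod_Phic)
  have "f k = 0" if k: "k \<in> kernel XB (rd_X R) fst" for k
  proof -
    have eval: "group_hom (homZ_group XB) integer_group (\<lambda>g. g k)"
      using eval_hom_homZ_group[of k XB] k comm_group.axioms(2)[OF comm_group_homZ_group[OF group_XB]]
      by (simp add: group_hom_def group_hom_axioms_def kernel_def)
    have "generate (homZ_group XB) (dual_fst ` rd_Phic R) \<subseteq> kernel (homZ_group XB) integer_group (\<lambda>g. g k)"
      using R.coroots_subset k
      by (intro group_hom.generate_subset_kernel[OF eval]) (auto simp: dual_fst_homZ dual_fst_apply kernel_def)
    with gen have "(f [^]\<^bsub>homZ_group XB\<^esub> n) k = 0" by (auto simp: kernel_def)
    then have "int n * f k = 0"
      using group_hom.hom_nat_pow[OF eval] f by simp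
    with n show ?thesis by simp
  qed
  with f show "f \<in> dual_fst ` carrier (rd_Xc R)" by (rule homZ_eq_dual_fst)
qed

lemma dual_snd_image: "dual_snd ` carrier (rd_Xc T) = perp_X R' (rd_Phi R')"
proof (intro equalityI subsetI)
  fix f assume "f \<in> dual_snd ` carrier (rd_Xc T)"
  then show "f \<in> perp_X R' (rd_Phi R')"
    by (auto simp: perp_X_def central_prod_Xc central_prod_Phi central_prod_pair dual_snd_homZ
        dual_snd_apply root_in_B)
next
  fix f assume "f \<in> perp_X R' (rd_Phi R')"
  then have f: "f \<in> homZ XB" and roots: "\<And>b. b \<in> rd_Phi R' \<Longrightarrow> f b = 0"
    by (auto simp: perp_X_def central_prod_Xc central_prod_pair)
  interpret f: group_hom XB integer_group f by (rule group_hom_homZ[OF group_XB f])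
  have "f k = 0" if "k \<in> kernel XB (rd_X T) snd" for k
  proof -
    obtain n :: nat where k: "k \<in> B" and n: "n > 0" "k [^]\<^bsub>XB\<^esub> n \<in> generate XB (rd_Phi R')"
      using \<open>k \<in> kernel XB (rd_X T) snd\<close>
      by (auto simp: top_roots_eq_kernel_snd[symmetric] top_X_def central_prod_X)
    have "generate XB (rd_Phi R') \<subseteq> kernel XB integer_group f"
      using roots roots_B by (intro f.generate_subset_kernel) auto
    with n(2) have "f (k [^]\<^bsub>XB\<^esub> n) = 0" by (auto simp: kernel_def)
    with k f.hom_nat_pow n(1) show ?thesis by simp
  qed
  with f show "f \<in> dual_snd ` carrier (rd_Xc T)" by (rule homZ_eq_dual_snd)
qed

lemma rd_iso_quotient:
  fixes D :: "(('a \<times> 'c) set, 'a \<times> 'c \<Rightarrow> int) root_datum" and H :: "('x, 'y) root_datum"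
  assumes p: "group_hom XB (rd_X H) p" and p_onto: "p ` B = carrier (rd_X H)"
    and D_X: "rd_X D = XB Mod kernel XB (rd_X H) p" and D_pair: "rd_pair D = quot_pair R'"
    and D_Xc: "rd_Xc D = (homZ_group XB)\<lparr>carrier := S\<rparr>"
    and g: "group_hom (rd_Xc H) (homZ_group XB) g" "inj_on g (carrier (rd_Xc H))"
    and g_image: "g ` carrier (rd_Xc H) = S"
    and g_pair: "\<And>b y. b \<in> B \<Longrightarrow> y \<in> carrier (rd_Xc H) \<Longrightarrow> g y b = rd_pair H (p b) y"
    and roots: "induced_map p ` rd_Phi D = rd_Phi H" and coroots: "g ` rd_Phic H = rd_Phic D"
  shows "rd_iso D H (induced_map p)"
  unfolding rd_iso_def
proof (intro conjI exI ballI)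
  show "induced_map p \<in> iso (rd_X D) (rd_X H)"
    unfolding D_X induced_map_def[abs_def]
    by (rule group_hom.FactGroup_iso_set[OF p]) (simp add: p_onto)
  show "g \<in> iso (rd_Xc H) (rd_Xc D)"
    unfolding D_Xc by (rule hom_onto_iso_restrict_carrier[OF group_hom.homh[OF g(1)] g(2) g_image])
  fix C y assume "C \<in> carrier (rd_X D)" "y \<in> carrier (rd_Xc H)"
  then show "rd_pair D C (g y) = rd_pair H (induced_map p C) y"
    using group_hom.induced_map_some_elem[OF p, of C]
    by (simp add: D_X D_pair quot_pair_def central_prod_pair g_pair)
qed (use roots coroots in auto)

lemma rd_iso_der: "rd_iso (rd_der R') R (induced_map fst)"
proof (rule rd_iso_quotient[OF fst_hom fst_onto _ _ _ dual_fst_hom inj_on_dual_fst dual_fst_image])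
  show "rd_X (rd_der R') = XB Mod kernel XB (rd_X R) fst"
    by (simp add: rd_der_def central_prod_X perp_coroots_eq_kernel_fst)
  have "induced_map fst (kernel XB (rd_X R) fst #>\<^bsub>XB\<^esub> (a, \<one>\<^bsub>rd_X T\<^esub>)) = a" if "a \<in> rd_Phi R" for a
    using group_hom.induced_map_r_coset[OF fst_hom] root_in_B[OF that] by simp
  then show "induced_map fst ` rd_Phi (rd_der R') = rd_Phi R"
    by (simp add: rd_der_def central_prod_X central_prod_Phi perp_coroots_eq_kernel_fst image_image)
qed (auto simp: rd_der_def central_prod_Xc central_prod_Phic dual_fst_def)

lemma rd_iso_rad: "rd_iso (rd_rad R') T (induced_map snd)"
  using torus
  by (intro rd_iso_quotient[OF snd_hom snd_onto _ _ _ dual_snd_hom inj_on_dual_snd dual_snd_image])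
    (auto simp: rd_rad_def rd_torus_def central_prod_X central_prod_Xc top_roots_eq_kernel_snd dual_snd_def)

end

theorem mainTheorem7:
  fixes R :: "('a, 'b) root_datum" and T :: "('c, 'd) root_datum" and A :: "'e monoid"
    and h1 :: "'a \<Rightarrow> 'e" and h2 :: "'c \<Rightarrow> 'e"
  assumes "root_datum R" and "semisimple R"
    and "root_datum T" and "rd_torus T"
    and "comm_group A" and "finite (carrier A)"
    and "h1 \<in> hom (rd_X R) A" and "h1 ` carrier (rd_X R) = carrier A"
    and "h2 \<in> hom (rd_X T) A" and "h2 ` carrier (rd_X T) = carrier A"
    and "rd_Phi R \<subseteq> kernel (rd_X R) A h1"
  defines "R' \<equiv> central_prod R T h1 h2"
  shows "kernel (rd_X R') (rd_X R) fst = perp_Xc R' (rd_Phic R') \<and>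
         rd_iso (rd_der R') R (induced_map fst) \<and>
         kernel (rd_X R') (rd_X T) snd = top_X R' (rd_Phi R') \<and>
         rd_iso (rd_rad R') T (induced_map snd) \<and>
         (\<forall>b\<in>carrier (rd_X R'). h1 (fst b) = h2 (snd b)) \<and>
         kernel (rd_X R') A (h1 \<circ> fst) = top_X R' (rd_Phi R') <#>\<^bsub>rd_X R'\<^esub> perp_Xc R' (rd_Phic R') \<and>
         kernel (rd_X R') A (h2 \<circ> snd) = top_X R' (rd_Phi R') <#>\<^bsub>rd_X R'\<^esub> perp_Xc R' (rd_Phic R') \<and>
         top_X R' (rd_Phi R') \<inter> perp_Xc R' (rd_Phic R') = {\<one>\<^bsub>rd_X R'\<^esub>} \<and>
         induced_map (h1 \<circ> fst) \<in>
           iso (rd_X R' Mod (top_X R' (rd_Phi R') <#>\<^bsub>rd_X R'\<^esub> perp_Xc R' (rd_Phic R'))) A"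
proof -
  interpret torus_central_product R T A h1 h2
    using assms(1-5,7-11)
    by (simp add: torus_central_product_def torus_central_product_axioms_def semisimple_root_data_def
        semisimple_root_data_axioms_def root_data_def)
  show ?thesis
    unfolding R'_def central_prod_X perp_coroots_eq_kernel_fst top_roots_eq_kernel_snd
      kernel_h2_snd kernel_h1_fst[symmetric]
    using rd_iso_der rd_iso_rad induced_map_h1_fst_iso kernel_snd_inter_kernel_fst
    by (auto dest: B_D)
qed

end
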